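(* Let $n\ge 2$ and $d\ge n+1$. For every Perazzo form $f$ of degree $d$ in $S$, the $h$-vector of $A_f$ satisfies $$h_i(A_f)\ \le\ \min\big((n+2)i+1,\ d+2\big)\quad\text{for }1\le i\le\lfloor d/2\rfloor$$ (and $h_i=h_{d-i}$). Moreover there exists a Perazzo form $f$ of degree $d$ (with $g=0$) for which equality holds for all $1\le i\le \lfloor d/2\rfloor$. Thus the componentwise maximum $h$-vector is $h_i=\min((n+2)i+1,d+2)$ for $1\le i\le\lfloor d/2\rfloor$, extended by symmetry, with $h_0=h_d=1$.
   Context: $K$ is an algebraically closed field of characteristic zero. $S=K[x_0,\dots,x_n,u,v]$ and $R=K[y_0,\dots,y_n,U,V]$ acts on $S$ by differentiation ($y_i=\partial/\partial x_i$, $U=\partial/\partial u$, $V=\partial/\partial v$); write $\theta\circ f$ for this action. A Perazzo form of degree $d$ is $f=x_0p_0+x_1p_1+\cdots+x_np_n+g$ where $p_0,\dots,p_n\in K[u,v]_{d-1}$ are linearly independent but algebraically dependent forms and $g\in K[u,v]_d$. $\operatorname{Ann}_R(f)=\{\theta\in R:\theta\circ f=0\}$ and $A_f=R/\operatorname{Ann}_R(f)$ is a graded artinian Gorenstein algebra of socle degree $d$; its $h$-vector is $h_i=\dim_K [A_f]_i$, which equals the dimension of the $K$-span of all order-$i$ partial derivatives of $f$, and satisfies $h_i=h_{d-i}$. *)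

theory Defs
  imports "HOL-Library.Poly_Mapping" "HOL-Computational_Algebra.Polynomial"
begin

text \<open>Variable index j stands for x_j
(0 <= j <= n), index n+1 for u and index n+2 for v.\<close>

type_synonym 'a mpoly = "(nat \<Rightarrow>\<^sub>0 nat) \<Rightarrow>\<^sub>0 'a"

definition mvar :: "nat \<Rightarrow> 'a::comm_ring_1 mpoly" where
  "mvar j = Poly_Mapping.single (Poly_Mapping.single j 1) 1"

definition mconst :: "'a::comm_ring_1 \<Rightarrow> 'a mpoly" where
  "mconst c = Poly_Mapping.single 0 c"

definition mscale :: "'a::field \<Rightarrow> 'a mpoly \<Rightarrow> 'a mpoly" where
  "mscale c p = Poly_Mapping.map (\<lambda>x. c * x) p"

definition mdeg :: "(nat \<Rightarrow>\<^sub>0 nat) \<Rightarrow> nat" where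
  "mdeg m = (\<Sum>j\<in>Poly_Mapping.keys m. Poly_Mapping.lookup m j)"

definition is_form_in :: "nat set \<Rightarrow> nat \<Rightarrow> 'a::comm_ring_1 mpoly \<Rightarrow> bool" where
  "is_form_in V e p \<longleftrightarrow> (\<forall>m\<in>Poly_Mapping.keys p. Poly_Mapping.keys m \<subseteq> V \<and> mdeg m = e)"

definition mderiv :: "nat \<Rightarrow> 'a::comm_ring_1 mpoly \<Rightarrow> 'a mpoly" where
  "mderiv i p = (\<Sum>m\<in>Poly_Mapping.keys p.
      Poly_Mapping.single (m - Poly_Mapping.single i 1) (of_nat (Poly_Mapping.lookup m i) * Poly_Mapping.lookup p m))"

definition msubst :: "'a::comm_ring_1 mpoly \<Rightarrow> (nat \<Rightarrow> 'a mpoly) \<Rightarrow> 'a mpoly" where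
  "msubst F p = (\<Sum>m\<in>Poly_Mapping.keys F. mconst (Poly_Mapping.lookup F m) * (\<Prod>j\<in>Poly_Mapping.keys m. p j ^ Poly_Mapping.lookup m j))"

definition perazzo_data :: "nat \<Rightarrow> nat \<Rightarrow> (nat \<Rightarrow> 'a::field mpoly) \<Rightarrow> 'a mpoly \<Rightarrow> bool" where
  "perazzo_data n d p g \<longleftrightarrow>
     (\<forall>j\<le>n. is_form_in {n+1, n+2} (d - 1) (p j)) \<and>
     (\<forall>c. (\<Sum>j\<le>n. mscale (c j) (p j)) = 0 \<longrightarrow> (\<forall>j\<le>n. c j = 0)) \<and>
     (\<exists>F::'a mpoly. F \<noteq> 0 \<and> (\<forall>m\<in>Poly_Mapping.keys F. Poly_Mapping.keys m \<subseteq> {0..n}) \<and> msubst F p = 0) \<and>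
     is_form_in {n+1, n+2} d g"

definition perazzo_poly :: "nat \<Rightarrow> (nat \<Rightarrow> 'a::field mpoly) \<Rightarrow> 'a mpoly \<Rightarrow> 'a mpoly" where
  "perazzo_poly n p g = (\<Sum>j\<le>n. mvar j * p j) + g"

definition is_perazzo_form :: "nat \<Rightarrow> nat \<Rightarrow> 'a::field mpoly \<Rightarrow> bool" where
  "is_perazzo_form n d f \<longleftrightarrow> (\<exists>p g. perazzo_data n d p g \<and> f = perazzo_poly n p g)"

definition partials :: "nat \<Rightarrow> nat \<Rightarrow> 'a::comm_ring_1 mpoly \<Rightarrow> 'a mpoly set" where
  "partials n i f = {foldr mderiv js f | js. length js = i \<and> set js \<subseteq> {0..n+2}}"

text \<open>h_i(A_f) = dimension of the K-span of the order-i partial derivatives of f.\<close>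
definition hvec :: "nat \<Rightarrow> 'a::field mpoly \<Rightarrow> nat \<Rightarrow> nat" where
  "hvec n f i = vector_space.dim mscale (partials n i f)"

end

theory Submission
  imports Defs
begin

text \<open>
  A Perazzo form f = x_0 p_0 + ... + x_n p_n + g is linear in x_0, ..., x_n, so its partial
  derivatives of order i with two x-derivatives vanish. What remains are the i + 1 pure
  derivatives D_u^a D_v^(i-a) f and the (n + 1) i mixed ones D_(x_j) D_u^a D_v^b f = D_u^a D_v^b p_j
  with a + b = i - 1; the latter are binary forms of degree d - i, so they also span at most
  d - i + 1 dimensions. Hence h_i <= (i + 1) + min ((n + 1) i) (d - i + 1) = min ((n + 2) i + 1) (d + 2).

  For equality take monomials p_j = u^(e_j) v^(d-1-e_j) with exponents e_0 < ... < e_n spread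
  evenly over 0, ..., d - 1 (three monomials in u, v are always algebraically dependent). Then
  the pure derivatives have pairwise disjoint supports, and the mixed ones are multiples of the
  monomials u^c v^(d-i-c) with c in the windows e_j - i < c <= e_j, which are pairwise disjoint
  when i is at most the spacing of the exponents and cover all of 0, ..., d - i otherwise.
\<close>

section \<open>Polynomials as a vector space\<close>

lemma lookup_mscale [simp]: "Poly_Mapping.lookup (mscale c p) m = c * Poly_Mapping.lookup p m"
  unfolding mscale_def by (simp add: Poly_Mapping.map.rep_eq when_def)

interpretation mpoly: vector_space "mscale :: 'a::field \<Rightarrow> 'a mpoly \<Rightarrow> 'a mpoly"
  by unfold_locales (auto intro!: poly_mapping_eqI simp: lookup_add algebra_simps)

lemma single_one_neq_zero: "Poly_Mapping.single m (1::'a::zero_neq_one) \<noteq> 0"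
  by (metis lookup_single_eq lookup_zero zero_neq_one)

lemma single_one_eq_iff:
  "Poly_Mapping.single m (1::'a::zero_neq_one) = Poly_Mapping.single m' 1 \<longleftrightarrow> m = m'"
  by (metis lookup_single_eq lookup_single_not_eq zero_neq_one)

lemma in_span_singles:
  fixes q :: "'a::field mpoly"
  assumes "Poly_Mapping.keys q \<subseteq> T"
  shows "q \<in> mpoly.span ((\<lambda>m. Poly_Mapping.single m 1) ` T)"
proof -
  have "q = (\<Sum>m\<in>Poly_Mapping.keys q. Poly_Mapping.single m (Poly_Mapping.lookup q m))"
    by (rule poly_mapping_eqI) (simp add: lookup_sum lookup_single when_def in_keys_iff)
  also have "\<dots> = (\<Sum>m\<in>Poly_Mapping.keys q. mscale (Poly_Mapping.lookup q m) (Poly_Mapping.single m 1))"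
    by (intro sum.cong refl poly_mapping_eqI) (simp add: lookup_single when_def)
  also have "\<dots> \<in> mpoly.span ((\<lambda>m. Poly_Mapping.single m 1) ` T)"
    using assms by (intro mpoly.span_sum mpoly.span_scale mpoly.span_base) auto
  finally show ?thesis .
qed

lemma independent_if_disjoint_keys:
  fixes S :: "'a::field mpoly set"
  assumes "0 \<notin> S"
    and "\<And>q q'. q \<in> S \<Longrightarrow> q' \<in> S \<Longrightarrow> q \<noteq> q' \<Longrightarrow>
      Poly_Mapping.keys q \<inter> Poly_Mapping.keys q' = {}"
  shows "mpoly.independent S"
  unfolding mpoly.independent_explicit_finite_subsets
proof (intro allI impI ballI)
  fix T c q
  assume T: "T \<subseteq> S" "finite T" and sum: "(\<Sum>q'\<in>T. mscale (c q') q') = 0" and q: "q \<in> T"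
  obtain m where m: "m \<in> Poly_Mapping.keys q"
    using assms(1) T q by (metis keys_eq_empty ex_in_conv subsetD)
  have "Poly_Mapping.lookup q' m = 0" if "q' \<in> T - {q}" for q'
  proof -
    have "Poly_Mapping.keys q \<inter> Poly_Mapping.keys q' = {}"
      using assms(2)[of q q'] that T q by auto
    with m show ?thesis
      by (auto simp: in_keys_iff)
  qed
  then have "(\<Sum>q'\<in>T - {q}. c q' * Poly_Mapping.lookup q' m) = 0"
    by simp
  moreover have "0 = (\<Sum>q'\<in>T. c q' * Poly_Mapping.lookup q' m)"
    using arg_cong[OF sum, of "\<lambda>p. Poly_Mapping.lookup p m"] by (simp add: lookup_sum)
  ultimately have "0 = c q * Poly_Mapping.lookup q m"
    by (simp add: sum.remove[OF T(2) q])
  with m show "c q = 0"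
    by (simp add: in_keys_iff)
qed

lemma card_independent_le_dim:
  fixes P :: "'a::field mpoly set"
  assumes "mpoly.independent T" "T \<subseteq> mpoly.span P" "P \<subseteq> mpoly.span W" "finite W"
  shows "card T \<le> mpoly.dim P"
proof -
  obtain B where B: "B \<subseteq> P" "mpoly.independent B" "P \<subseteq> mpoly.span B" "card B = mpoly.dim P"
    by (rule mpoly.basis_exists)
  have "B \<subseteq> mpoly.span W"
    using B(1) assms(3) by (rule order_trans)
  then have "finite B"
    using mpoly.independent_span_bound[OF assms(4) B(2)] by blast
  have "mpoly.span P \<subseteq> mpoly.span B"
    by (rule mpoly.span_minimal[OF B(3) mpoly.subspace_span])
  with assms(2) have "T \<subseteq> mpoly.span B"
    by (rule order_trans)
  with mpoly.independent_span_bound[OF \<open>finite B\<close> assms(1)] B(4) show ?thesis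
    by simp
qed

lemma single_in_span_if_keys_eq:
  fixes q :: "'a::field mpoly"
  assumes "q \<in> S" "Poly_Mapping.keys q = {m}"
  shows "Poly_Mapping.single m 1 \<in> mpoly.span S"
proof -
  define c where "c = Poly_Mapping.lookup q m"
  have "c \<noteq> 0"
    using assms(2) by (auto simp: c_def in_keys_iff)
  have q: "q = Poly_Mapping.single m c"
  proof (rule poly_mapping_eqI)
    fix k
    show "Poly_Mapping.lookup q k = Poly_Mapping.lookup (Poly_Mapping.single m c) k"
    proof (cases "k = m")
      case False
      then have "k \<notin> Poly_Mapping.keys q"
        using assms(2) by simp
      with False show ?thesis
        by (simp add: in_keys_iff lookup_single)
    qed (simp add: c_def)
  qed
  have "mscale (inverse c) (Poly_Mapping.single m c) = Poly_Mapping.single m 1"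
    using \<open>c \<noteq> 0\<close> by (intro poly_mapping_eqI) (simp add: lookup_single when_def)
  moreover have "mscale (inverse c) q \<in> mpoly.span S"
    by (rule mpoly.span_scale[OF mpoly.span_base[OF assms(1)]])
  ultimately show ?thesis
    by (simp add: q)
qed

abbreviation var_monom :: "nat \<Rightarrow> (nat \<Rightarrow>\<^sub>0 nat)" where
  "var_monom k \<equiv> Poly_Mapping.single k 1"

lemma lookup_mderiv:
  "Poly_Mapping.lookup (mderiv i p) m =
     of_nat (Poly_Mapping.lookup m i + 1) * Poly_Mapping.lookup p (m + var_monom i)"
proof -
  have shift: "k - var_monom i = m \<longleftrightarrow> k = m + var_monom i" if "Poly_Mapping.lookup k i \<noteq> 0" for k
    using that by (auto simp: poly_mapping_eq_iff fun_eq_iff lookup_add lookup_minus lookup_single when_def)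
  have "Poly_Mapping.lookup (mderiv i p) m = (\<Sum>k\<in>Poly_Mapping.keys p.
      if k = m + var_monom i then of_nat (Poly_Mapping.lookup k i) * Poly_Mapping.lookup p k else 0)"
    unfolding mderiv_def lookup_sum
  proof (intro sum.cong refl)
    fix k
    show "Poly_Mapping.lookup (Poly_Mapping.single (k - var_monom i)
        (of_nat (Poly_Mapping.lookup k i) * Poly_Mapping.lookup p k)) m =
      (if k = m + var_monom i then of_nat (Poly_Mapping.lookup k i) * Poly_Mapping.lookup p k else 0)"
    proof (cases "Poly_Mapping.lookup k i = 0")
      case True
      then have "k \<noteq> m + var_monom i"
        by (auto simp: lookup_add)
      with True show ?thesis
        by (simp add: lookup_single)
    next
      case False
      then show ?thesis
        using shift[OF False] by (auto simp: lookup_single when_def)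
    qed
  qed
  then show ?thesis
    by (simp add: lookup_add in_keys_iff)
qed

lemma mderiv_commute: "mderiv i (mderiv j p) = mderiv j (mderiv i p)"
  by (rule poly_mapping_eqI) (simp add: lookup_mderiv lookup_add lookup_single when_def algebra_simps)

lemma foldr_mderiv_commute: "foldr mderiv js (mderiv k p) = mderiv k (foldr mderiv js p)"
  by (induction js) (simp_all add: mderiv_commute)

definition monom_of_list :: "nat list \<Rightarrow> (nat \<Rightarrow>\<^sub>0 nat)" where
  "monom_of_list js = sum_list (map var_monom js)"

lemma monom_of_list_simps [simp]:
  "monom_of_list [] = 0"
  "monom_of_list (k # js) = var_monom k + monom_of_list js"
  "monom_of_list (js @ ks) = monom_of_list js + monom_of_list ks"
  "monom_of_list (replicate a k) = Poly_Mapping.single k a"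
  by (simp_all add: monom_of_list_def) (induction a; simp add: single_add[symmetric])

fun deriv_factor :: "nat list \<Rightarrow> (nat \<Rightarrow>\<^sub>0 nat) \<Rightarrow> nat" where
  "deriv_factor [] m = 1"
| "deriv_factor (k # js) m = (Poly_Mapping.lookup m k + 1) * deriv_factor js (m + var_monom k)"

lemma lookup_foldr_mderiv:
  "Poly_Mapping.lookup (foldr mderiv js p) m =
     of_nat (deriv_factor js m) * Poly_Mapping.lookup p (m + monom_of_list js)"
  by (induction js arbitrary: m) (simp_all add: lookup_mderiv add.assoc algebra_simps)

lemma keys_foldr_mderiv:
  fixes p :: "'a::field_char_0 mpoly"
  shows "m \<in> Poly_Mapping.keys (foldr mderiv js p) \<longleftrightarrow> m + monom_of_list js \<in> Poly_Mapping.keys p"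
proof -
  have "deriv_factor js m \<noteq> 0"
    by (induction js arbitrary: m) auto
  then show ?thesis
    by (simp add: in_keys_iff lookup_foldr_mderiv)
qed

lemma mdeg_eq_sum:
  assumes "finite S" "Poly_Mapping.keys m \<subseteq> S"
  shows "mdeg m = (\<Sum>k\<in>S. Poly_Mapping.lookup m k)"
  unfolding mdeg_def using assms by (intro sum.mono_neutral_left) (auto simp: in_keys_iff)

lemma mdeg_add: "mdeg (m + m') = mdeg m + mdeg m'"
proof -
  let ?S = "Poly_Mapping.keys m \<union> Poly_Mapping.keys m'"
  have "Poly_Mapping.keys (m + m') \<subseteq> ?S"
    by (rule keys_add)
  then show ?thesis
    by (simp add: mdeg_eq_sum[of ?S] lookup_add sum.distrib)
qed

lemma mdeg_single [simp]: "mdeg (Poly_Mapping.single k a) = a"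
  by (simp add: mdeg_eq_sum[of "{k}"])

definition uv_monom :: "nat \<Rightarrow> nat \<Rightarrow> nat \<Rightarrow> (nat \<Rightarrow>\<^sub>0 nat)" where
  "uv_monom n a b = Poly_Mapping.single (n+1) a + Poly_Mapping.single (n+2) b"

lemma lookup_uv_monom [simp]:
  "Poly_Mapping.lookup (uv_monom n a b) k = (if k = n+1 then a else 0) + (if k = n+2 then b else 0)"
  by (simp add: uv_monom_def lookup_add lookup_single)

lemma keys_uv_monom: "Poly_Mapping.keys (uv_monom n a b) \<subseteq> {n+1, n+2}"
  by (auto simp: in_keys_iff split: if_splits)

lemma mdeg_uv_monom [simp]: "mdeg (uv_monom n a b) = a + b"
  by (simp add: uv_monom_def mdeg_add)

lemma uv_monom_add: "uv_monom n a b + uv_monom n a' b' = uv_monom n (a + a') (b + b')"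
  by (simp add: uv_monom_def single_add ac_simps)

lemma uv_monom_eq_iff: "uv_monom n a b = uv_monom n a' b' \<longleftrightarrow> a = a' \<and> b = b'"
proof
  assume eq: "uv_monom n a b = uv_monom n a' b'"
  from arg_cong[OF eq, of "\<lambda>m. Poly_Mapping.lookup m (n+1)"]
    arg_cong[OF eq, of "\<lambda>m. Poly_Mapping.lookup m (n+2)"]
  show "a = a' \<and> b = b'"
    by simp
qed simp

lemma uv_monom_of_keys:
  assumes "Poly_Mapping.keys m \<subseteq> {n+1, n+2}"
  shows "m = uv_monom n (Poly_Mapping.lookup m (n+1)) (Poly_Mapping.lookup m (n+2))"
  using assms by (intro poly_mapping_eqI) (auto simp: in_keys_iff)

lemma lookup_eq_0_if_keys_uv:
  "Poly_Mapping.keys m \<subseteq> {n+1, n+2} \<Longrightarrow> k \<le> (n::nat) \<Longrightarrow> Poly_Mapping.lookup m k = 0"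
  by (auto simp: in_keys_iff)

definition uv_deriv :: "nat \<Rightarrow> nat \<Rightarrow> nat \<Rightarrow> 'a::comm_ring_1 mpoly \<Rightarrow> 'a mpoly" where
  "uv_deriv n a b q = foldr mderiv (replicate a (n+1) @ replicate b (n+2)) q"

lemma mderiv_uv_deriv:
  "mderiv (n+1) (uv_deriv n a b q) = uv_deriv n (Suc a) b q"
  "mderiv (n+2) (uv_deriv n a b q) = uv_deriv n a (Suc b) q"
  by (simp_all del: foldr_replicate
      add: uv_deriv_def foldr_mderiv_commute[symmetric] replicate_append_same[symmetric])

lemma keys_uv_deriv:
  fixes q :: "'a::field_char_0 mpoly"
  shows "m \<in> Poly_Mapping.keys (uv_deriv n a b q) \<longleftrightarrow> m + uv_monom n a b \<in> Poly_Mapping.keys q"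
  unfolding uv_deriv_def keys_foldr_mderiv by (simp add: uv_monom_def)

lemma keys_mderiv_uv_deriv:
  fixes q :: "'a::field_char_0 mpoly"
  shows "m \<in> Poly_Mapping.keys (mderiv j (uv_deriv n a b q)) \<longleftrightarrow>
    var_monom j + (m + uv_monom n a b) \<in> Poly_Mapping.keys q"
  using keys_foldr_mderiv[of m "j # replicate a (n+1) @ replicate b (n+2)" q]
  by (simp add: uv_deriv_def uv_monom_def ac_simps)

lemma foldr_mderiv_normal_form:
  assumes "set js \<subseteq> {0..n+2}"
  shows "\<exists>xs a b. length xs + a + b = length js \<and> set xs \<subseteq> {..n} \<and>
    foldr mderiv js q = foldr mderiv xs (uv_deriv n a b q)"
  using assms
proof (induction js)
  case Nil
  show ?case
    by (rule exI[of _ "[]"]) (simp add: uv_deriv_def)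
next
  case (Cons k js)
  then obtain xs a b where IH: "length xs + a + b = length js" "set xs \<subseteq> {..n}"
      "foldr mderiv js q = foldr mderiv xs (uv_deriv n a b q)"
    by auto
  consider "k \<le> n" | "k = n+1" | "k = n+2"
    using Cons.prems by force
  then show ?case
  proof cases
    case 1
    with IH show ?thesis
      by (intro exI[of _ "k # xs"]) auto
  next
    case 2
    from IH(3) have "foldr mderiv (k # js) q = foldr mderiv xs (uv_deriv n (Suc a) b q)"
      unfolding 2 by (simp only: foldr_Cons o_apply foldr_mderiv_commute[symmetric] mderiv_uv_deriv)
    with IH(1,2) show ?thesis
      by force
  next
    case 3
    from IH(3) have "foldr mderiv (k # js) q = foldr mderiv xs (uv_deriv n a (Suc b) q)"
      unfolding 3 by (simp only: foldr_Cons o_apply foldr_mderiv_commute[symmetric] mderiv_uv_deriv)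
    with IH(1,2) show ?thesis
      by force
  qed
qed

section \<open>The upper bound\<close>

lemma keys_perazzo_poly:
  assumes "m \<in> Poly_Mapping.keys (perazzo_poly n p g)"
  obtains (linear) j m' where "j \<le> n" "m' \<in> Poly_Mapping.keys (p j)" "m = var_monom j + m'"
    | (free) "m \<in> Poly_Mapping.keys g"
proof -
  have "m \<in> Poly_Mapping.keys (\<Sum>j\<le>n. mvar j * p j) \<union> Poly_Mapping.keys g"
    using assms keys_add[of "\<Sum>j\<le>n. mvar j * p j" g] unfolding perazzo_poly_def by blast
  then consider "m \<in> Poly_Mapping.keys g" | j where "j \<le> n" "m \<in> Poly_Mapping.keys (mvar j * p j)"
    using keys_sum[of "\<lambda>j. mvar j * p j" "{..n}"] by blast
  then show ?thesis
  proof cases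
    case (2 j)
    then show ?thesis
      using keys_mult[of "mvar j" "p j"] that(1) by (auto simp: mvar_def)
  qed (rule that(2))
qed

lemma perazzo_two_x_derivs_vanish:
  fixes p :: "nat \<Rightarrow> 'a::field_char_0 mpoly"
  assumes forms: "\<forall>j\<le>n. is_form_in {n+1, n+2} e (p j)" "is_form_in {n+1, n+2} e' g"
    and j: "j1 \<le> n" "j2 \<le> n"
  shows "foldr mderiv (j1 # j2 # js) (perazzo_poly n p g) = 0"
proof (rule ccontr)
  assume "foldr mderiv (j1 # j2 # js) (perazzo_poly n p g) \<noteq> 0"
  then obtain m where m: "m \<in> Poly_Mapping.keys (foldr mderiv (j1 # j2 # js) (perazzo_poly n p g))"
    by (metis keys_eq_empty ex_in_conv)
  let ?M = "var_monom j1 + var_monom j2 + (m + monom_of_list js)"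
  have "?M \<in> Poly_Mapping.keys (perazzo_poly n p g)"
    using m unfolding keys_foldr_mderiv by (simp add: ac_simps)
  moreover have low: "1 \<le> Poly_Mapping.lookup ?M j1" "1 \<le> Poly_Mapping.lookup ?M j2"
    "j1 = j2 \<Longrightarrow> 2 \<le> Poly_Mapping.lookup ?M j1"
    by (auto simp: lookup_add)
  ultimately show False
  proof (cases rule: keys_perazzo_poly)
    case (linear j m')
    have "Poly_Mapping.keys m' \<subseteq> {n+1, n+2}"
      using forms(1) linear(1,2) by (auto simp: is_form_in_def)
    then have "Poly_Mapping.lookup ?M k = (if k = j then 1 else 0)" if "k \<le> n" for k
      using that linear(3) by (simp add: lookup_add lookup_single lookup_eq_0_if_keys_uv)
    from this[OF j(1)] this[OF j(2)] low show False
      by (cases "j1 = j2") (auto split: if_splits)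
  next
    case free
    then have "Poly_Mapping.keys ?M \<subseteq> {n+1, n+2}"
      using forms(2) by (auto simp: is_form_in_def)
    from lookup_eq_0_if_keys_uv[OF this j(1)] low(1) show False
      by simp
  qed
qed

lemma keys_mixed_partial_perazzo:
  fixes p :: "nat \<Rightarrow> 'a::field_char_0 mpoly"
  assumes forms: "\<forall>j\<le>n. is_form_in {n+1, n+2} (d-1) (p j)" "is_form_in {n+1, n+2} d g"
    and j: "j \<le> n"
    and m: "m \<in> Poly_Mapping.keys (mderiv j (uv_deriv n a b (perazzo_poly n p g)))"
  shows "Poly_Mapping.keys m \<subseteq> {n+1, n+2} \<and> mdeg m + a + b = d - 1"
proof -
  have "var_monom j + (m + uv_monom n a b) \<in> Poly_Mapping.keys (perazzo_poly n p g)"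
    using m unfolding keys_mderiv_uv_deriv .
  then show ?thesis
  proof (cases rule: keys_perazzo_poly)
    case (linear j' m')
    have m': "Poly_Mapping.keys m' \<subseteq> {n+1, n+2}" "mdeg m' = d - 1"
      using forms(1) linear(1,2) by (auto simp: is_form_in_def)
    have "j' = j"
      using arg_cong[OF linear(3), of "\<lambda>m. Poly_Mapping.lookup m j"] lookup_eq_0_if_keys_uv[OF m'(1) j]
      by (auto simp: lookup_add lookup_single when_def split: if_splits)
    then have m'_eq: "m' = m + uv_monom n a b"
      using linear(3) by simp
    then have "Poly_Mapping.keys m \<subseteq> Poly_Mapping.keys m'"
      by (auto simp: in_keys_iff lookup_add)
    with m' m'_eq show ?thesis
      by (auto simp: mdeg_add)
  next
    case free
    then have "Poly_Mapping.keys (var_monom j + (m + uv_monom n a b)) \<subseteq> {n+1, n+2}"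
      using forms(2) by (auto simp: is_form_in_def)
    from lookup_eq_0_if_keys_uv[OF this j] show ?thesis
      by (simp add: lookup_add)
  qed
qed

lemma foldr_mderiv_in_partials:
  "set js \<subseteq> {0..n+2} \<Longrightarrow> foldr mderiv js f \<in> partials n (length js) f"
  by (auto simp: partials_def)

definition uv_partials :: "nat \<Rightarrow> nat \<Rightarrow> 'a::comm_ring_1 mpoly \<Rightarrow> 'a mpoly set" where
  "uv_partials n i f = (\<lambda>a. uv_deriv n a (i - a) f) ` {..i}"

definition mixed_partials :: "nat \<Rightarrow> nat \<Rightarrow> 'a::comm_ring_1 mpoly \<Rightarrow> 'a mpoly set" where
  "mixed_partials n i f = (\<lambda>(j, a). mderiv j (uv_deriv n a (i - 1 - a) f)) ` ({..n} \<times> {..<i})"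

definition uv_monomials :: "nat \<Rightarrow> nat \<Rightarrow> 'a::comm_ring_1 mpoly set" where
  "uv_monomials n e = (\<lambda>c. Poly_Mapping.single (uv_monom n c (e - c)) 1) ` {..e}"

lemma uv_partials_subset_partials: "uv_partials n i f \<subseteq> partials n i f"
proof
  fix q
  assume "q \<in> uv_partials n i f"
  then obtain a where "a \<le> i" "q = foldr mderiv (replicate a (n+1) @ replicate (i - a) (n+2)) f"
    by (auto simp: uv_partials_def uv_deriv_def simp del: foldr_replicate)
  then show "q \<in> partials n i f"
    using foldr_mderiv_in_partials[of "replicate a (n+1) @ replicate (i - a) (n+2)" n f]
    by (simp del: foldr_replicate add: set_replicate_conv_if)
qed

lemma partials_perazzo_subset:
  fixes p :: "nat \<Rightarrow> 'a::field_char_0 mpoly"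
  assumes forms: "\<forall>j\<le>n. is_form_in {n+1, n+2} e (p j)" "is_form_in {n+1, n+2} e' g"
  shows "partials n i (perazzo_poly n p g) \<subseteq>
    insert 0 (uv_partials n i (perazzo_poly n p g) \<union> mixed_partials n i (perazzo_poly n p g))"
proof
  fix q
  assume "q \<in> partials n i (perazzo_poly n p g)"
  then obtain js where js: "length js = i" "set js \<subseteq> {0..n+2}" "q = foldr mderiv js (perazzo_poly n p g)"
    by (auto simp: partials_def)
  then obtain xs a b where nf: "length xs + a + b = i" "set xs \<subseteq> {..n}"
      "q = foldr mderiv xs (uv_deriv n a b (perazzo_poly n p g))"
    using foldr_mderiv_normal_form[OF js(2)] by metis
  show "q \<in> insert 0 (uv_partials n i (perazzo_poly n p g) \<union> mixed_partials n i (perazzo_poly n p g))"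
  proof (cases xs)
    case Nil
    with nf show ?thesis
      by (auto simp: uv_partials_def intro!: image_eqI[of _ _ a])
  next
    case (Cons j1 xs')
    show ?thesis
    proof (cases xs')
      case Nil
      with nf Cons show ?thesis
        by (auto simp: mixed_partials_def intro!: image_eqI[of _ _ "(j1, a)"])
    next
      case (Cons j2 rest)
      with nf \<open>xs = j1 # xs'\<close> have j12: "j1 \<le> n" "j2 \<le> n"
        and q_eq: "q = foldr mderiv (j1 # j2 # rest @ replicate a (n+1) @ replicate b (n+2)) (perazzo_poly n p g)"
        by (auto simp del: foldr_replicate simp add: uv_deriv_def)
      have "q = 0"
        unfolding q_eq by (rule perazzo_two_x_derivs_vanish[OF forms j12])
      then show ?thesis
        by simp
    qed
  qed
qed

lemma mixed_partials_perazzo_subset_span: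
  fixes p :: "nat \<Rightarrow> 'a::field_char_0 mpoly"
  assumes forms: "\<forall>j\<le>n. is_form_in {n+1, n+2} (d-1) (p j)" "is_form_in {n+1, n+2} d g"
  shows "mixed_partials n i (perazzo_poly n p g) \<subseteq> mpoly.span (uv_monomials n (d - i))"
proof
  fix q
  assume "q \<in> mixed_partials n i (perazzo_poly n p g)"
  then obtain j a where ja: "j \<le> n" "a < i" "q = mderiv j (uv_deriv n a (i - 1 - a) (perazzo_poly n p g))"
    by (auto simp: mixed_partials_def)
  have "Poly_Mapping.keys q \<subseteq> (\<lambda>c. uv_monom n c (d - i - c)) ` {..d - i}"
  proof
    fix m
    assume "m \<in> Poly_Mapping.keys q"
    then have "Poly_Mapping.keys m \<subseteq> {n+1, n+2} \<and> mdeg m + a + (i - 1 - a) = d - 1"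
      unfolding ja(3) by (rule keys_mixed_partial_perazzo[OF forms ja(1)])
    then have m: "Poly_Mapping.keys m \<subseteq> {n+1, n+2}" "mdeg m + a + (i - 1 - a) = d - 1"
      by auto
    have sum: "Poly_Mapping.lookup m (n+1) + Poly_Mapping.lookup m (n+2) = d - i"
      using m(2) ja(2) mdeg_eq_sum[OF _ m(1)] by simp
    then have "m = uv_monom n (Poly_Mapping.lookup m (n+1)) (d - i - Poly_Mapping.lookup m (n+1))"
      using uv_monom_of_keys[OF m(1)] by (metis add_diff_cancel_left')
    moreover have "Poly_Mapping.lookup m (n+1) \<le> d - i"
      using sum by linarith
    ultimately show "m \<in> (\<lambda>c. uv_monom n c (d - i - c)) ` {..d - i}"
      by blast
  qed
  from in_span_singles[OF this] show "q \<in> mpoly.span (uv_monomials n (d - i))"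
    by (simp add: uv_monomials_def image_image)
qed

lemma hvec_perazzo_le:
  fixes p :: "nat \<Rightarrow> 'a::field_char_0 mpoly"
  assumes forms: "\<forall>j\<le>n. is_form_in {n+1, n+2} (d-1) (p j)" "is_form_in {n+1, n+2} d g"
    and "i \<le> d"
  shows "hvec n (perazzo_poly n p g) i \<le> min ((n + 2) * i + 1) (d + 2)"
proof -
  let ?P = "partials n i (perazzo_poly n p g)"
  let ?A = "uv_partials n i (perazzo_poly n p g)"
  let ?B = "mixed_partials n i (perazzo_poly n p g)"
  let ?M = "uv_monomials n (d - i) :: 'a mpoly set"
  have card: "card ?A \<le> i + 1" "card ?B \<le> (n + 1) * i" "card ?M \<le> d - i + 1"
    unfolding uv_partials_def mixed_partials_def uv_monomials_def
    using card_image_le[of "{..i}"] card_image_le[of "{..n} \<times> {..<i}"] card_image_le[of "{..d - i}"]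
    by (simp_all add: card_cartesian_product)
  have fin: "finite ?A" "finite ?B" "finite ?M"
    by (simp_all add: uv_partials_def mixed_partials_def uv_monomials_def)
  have P_AB: "?P \<subseteq> mpoly.span (?A \<union> ?B)"
    using partials_perazzo_subset[OF forms] mpoly.span_superset[of "?A \<union> ?B"]
      mpoly.span_zero[of "?A \<union> ?B"] by blast
  have "?B \<subseteq> mpoly.span (?A \<union> ?M)"
    using mixed_partials_perazzo_subset_span[OF forms] mpoly.span_mono[of ?M "?A \<union> ?M"] by blast
  then have "?A \<union> ?B \<subseteq> mpoly.span (?A \<union> ?M)"
    using mpoly.span_superset[of "?A \<union> ?M"] by blast
  then have "mpoly.span (?A \<union> ?B) \<subseteq> mpoly.span (?A \<union> ?M)"
    by (rule mpoly.span_minimal[OF _ mpoly.subspace_span])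
  with P_AB have P_AM: "?P \<subseteq> mpoly.span (?A \<union> ?M)"
    by (rule order_trans)
  have "hvec n (perazzo_poly n p g) i \<le> card (?A \<union> ?B)"
    unfolding hvec_def using P_AB fin by (intro mpoly.dim_le_card) auto
  also have "\<dots> \<le> (n + 2) * i + 1"
    using card_Un_le[of ?A ?B] card by simp
  finally have "hvec n (perazzo_poly n p g) i \<le> (n + 2) * i + 1" .
  moreover have "hvec n (perazzo_poly n p g) i \<le> card (?A \<union> ?M)"
    unfolding hvec_def using P_AM fin by (intro mpoly.dim_le_card) auto
  moreover have "card (?A \<union> ?M) \<le> d + 2"
    using card_Un_le[of ?A ?M] card \<open>i \<le> d\<close> by simp
  ultimately show ?thesis
    by simp
qed

section \<open>Monomial Perazzo forms\<close>

definition monomial_forms :: "nat \<Rightarrow> nat \<Rightarrow> (nat \<Rightarrow> nat) \<Rightarrow> nat \<Rightarrow> 'a::comm_ring_1 mpoly" where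
  "monomial_forms n d e j = Poly_Mapping.single (uv_monom n (e j) (d - 1 - e j)) 1"

lemma monomial_forms_is_form:
  "e j \<le> d - 1 \<Longrightarrow> is_form_in {n+1, n+2} (d - 1) (monomial_forms n d e j)"
  using keys_uv_monom by (auto simp: is_form_in_def monomial_forms_def)

lemma keys_monomial_perazzo:
  "m \<in> Poly_Mapping.keys (perazzo_poly n (monomial_forms n d e) 0 :: 'a::field_char_0 mpoly) \<longleftrightarrow>
    (\<exists>j\<le>n. m = var_monom j + uv_monom n (e j) (d - 1 - e j))"
proof
  assume "m \<in> Poly_Mapping.keys (perazzo_poly n (monomial_forms n d e) 0 :: 'a mpoly)"
  then show "\<exists>j\<le>n. m = var_monom j + uv_monom n (e j) (d - 1 - e j)"
    by (cases rule: keys_perazzo_poly) (auto simp: monomial_forms_def)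
next
  assume "\<exists>j\<le>n. m = var_monom j + uv_monom n (e j) (d - 1 - e j)"
  then obtain j0 where j0: "j0 \<le> n" "m = var_monom j0 + uv_monom n (e j0) (d - 1 - e j0)"
    by blast
  have eq: "var_monom j + uv_monom n (e j) (d - 1 - e j) = m \<longleftrightarrow> j = j0" if "j \<le> n" for j
  proof
    assume "var_monom j + uv_monom n (e j) (d - 1 - e j) = m"
    then have "Poly_Mapping.lookup (var_monom j + uv_monom n (e j) (d - 1 - e j)) j0 = Poly_Mapping.lookup m j0"
      by simp
    with j0 that show "j = j0"
      by (auto simp: lookup_add lookup_single when_def split: if_splits)
  qed (use j0 in simp)
  have "perazzo_poly n (monomial_forms n d e) 0 =
      (\<Sum>j\<le>n. Poly_Mapping.single (var_monom j + uv_monom n (e j) (d - 1 - e j)) (1::'a))"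
    by (simp add: perazzo_poly_def monomial_forms_def mvar_def mult_single)
  then have "Poly_Mapping.lookup (perazzo_poly n (monomial_forms n d e) 0 :: 'a mpoly) m =
      (\<Sum>j\<le>n. (1 when var_monom j + uv_monom n (e j) (d - 1 - e j) = m))"
    by (simp only: lookup_sum lookup_single)
  also have "\<dots> = (\<Sum>j\<le>n. if j = j0 then 1 else 0)"
    using eq by (intro sum.cong refl) (simp add: when_def)
  also have "\<dots> = 1"
    using j0(1) by simp
  finally show "m \<in> Poly_Mapping.keys (perazzo_poly n (monomial_forms n d e) 0 :: 'a mpoly)"
    by (simp add: in_keys_iff)
qed

lemma single_uv_monom_power:
  "Poly_Mapping.single (uv_monom n a b) (1::'a::comm_ring_1) ^ r =
    Poly_Mapping.single (uv_monom n (r * a) (r * b)) 1"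
  by (induction r) (simp_all add: mult_single uv_monom_add uv_monom_def[of n 0 0])

lemma monomial_forms_alg_dependent:
  assumes "2 \<le> n" "e 0 < e 1" "e 1 < e 2" "e 2 \<le> d - 1"
  shows "\<exists>F::'a::comm_ring_1 mpoly. F \<noteq> 0 \<and> (\<forall>m\<in>Poly_Mapping.keys F. Poly_Mapping.keys m \<subseteq> {0..n}) \<and>
    msubst F (monomial_forms n d e) = 0"
proof -
  define x y z where "x = e 1 - e 0" and "y = e 2 - e 1" and "z = d - 1 - e 2"
  have e: "e 1 = e 0 + x" "e 2 = e 0 + x + y" "d - 1 = e 0 + x + y + z" "0 < x" "0 < y"
    using assms by (auto simp: x_def y_def z_def)
  define M1 :: "nat \<Rightarrow>\<^sub>0 nat" where "M1 = Poly_Mapping.single 0 y + Poly_Mapping.single 2 x"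
  define M2 :: "nat \<Rightarrow>\<^sub>0 nat" where "M2 = Poly_Mapping.single 1 (x + y)"
  define F :: "'a mpoly" where "F = Poly_Mapping.single M1 1 - Poly_Mapping.single M2 1"
  have lookup_M: "Poly_Mapping.lookup M1 0 = y" "Poly_Mapping.lookup M1 2 = x"
    "Poly_Mapping.lookup M2 (Suc 0) = x + y" "Poly_Mapping.lookup M1 (Suc 0) = 0"
    by (simp_all add: M1_def M2_def lookup_add lookup_single)
  then have M12: "M1 \<noteq> M2"
    using e(4) by auto
  have lookup_F: "Poly_Mapping.lookup F m = (if m = M1 then 1 else if m = M2 then -1 else 0)" for m
    using M12 by (auto simp: F_def lookup_minus lookup_single when_def)
  have keys_F: "Poly_Mapping.keys F = {M1, M2}"
    by (auto simp: in_keys_iff lookup_F split: if_splits)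
  have keys_M: "Poly_Mapping.keys M1 = {0, 2}" "Poly_Mapping.keys M2 = {1}"
    using e(4,5) by (auto simp: in_keys_iff M1_def M2_def lookup_add lookup_single when_def split: if_splits)
  have "F \<noteq> 0"
    using lookup_F[of M1] by auto
  moreover have "\<forall>m\<in>Poly_Mapping.keys F. Poly_Mapping.keys m \<subseteq> {0..n}"
    using keys_F keys_M assms(1) by auto
  moreover have "msubst F (monomial_forms n d e) = 0"
  proof -
    have "msubst F (monomial_forms n d e) =
        mconst 1 * (monomial_forms n d e 0 ^ y * monomial_forms n d e 2 ^ x) +
        mconst (-1) * monomial_forms n d e 1 ^ (x + y)"
      unfolding msubst_def keys_F using M12 by (simp add: lookup_F keys_M lookup_M)
    moreover have "monomial_forms n d e 0 ^ y * monomial_forms n d e 2 ^ x =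
        (monomial_forms n d e 1 ^ (x + y) :: 'a mpoly)"
    proof -
      have "y * e 0 + x * e 2 = (x + y) * e 1"
        "y * (d - 1 - e 0) + x * (d - 1 - e 2) = (x + y) * (d - 1 - e 1)"
        unfolding e by (simp_all add: algebra_simps)
      then show ?thesis
        by (simp add: monomial_forms_def single_uv_monom_power mult_single uv_monom_add)
    qed
    ultimately show ?thesis
      by (simp add: mconst_def single_uminus)
  qed
  ultimately show ?thesis
    by blast
qed

lemma perazzo_data_monomial_forms:
  assumes "2 \<le> n" "strict_mono_on {..n} e" "e n \<le> d - 1"
  shows "perazzo_data n d (monomial_forms n d e :: nat \<Rightarrow> 'a::field mpoly) 0"
  unfolding perazzo_data_def
proof (intro conjI allI impI)
  fix j
  assume "j \<le> n"
  then have "e j \<le> d - 1"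
    using strict_mono_on_leD[OF assms(2), of j n] assms(3) by simp
  then show "is_form_in {n+1, n+2} (d - 1) (monomial_forms n d e j :: 'a mpoly)"
    by (rule monomial_forms_is_form)
next
  fix c :: "nat \<Rightarrow> 'a" and j0
  assume sum: "(\<Sum>j\<le>n. mscale (c j) (monomial_forms n d e j)) = 0" and "j0 \<le> n"
  have "e j = e j0 \<longleftrightarrow> j = j0" if "j \<le> n" for j
    using strict_mono_on_eq[OF assms(2)] that \<open>j0 \<le> n\<close> by simp
  then have "(\<Sum>j\<le>n. c j * (1 when uv_monom n (e j) (d - 1 - e j) = uv_monom n (e j0) (d - 1 - e j0))) =
      (\<Sum>j\<le>n. if j = j0 then c j else 0)"
    by (intro sum.cong refl) (auto simp: when_def dest: arg_cong[where f = "\<lambda>m. Poly_Mapping.lookup m (n+1)"])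
  with arg_cong[OF sum, of "\<lambda>p. Poly_Mapping.lookup p (uv_monom n (e j0) (d - 1 - e j0))"] \<open>j0 \<le> n\<close>
  show "c j0 = 0"
    by (simp add: lookup_sum monomial_forms_def lookup_single)
next
  show "\<exists>F::'a mpoly. F \<noteq> 0 \<and> (\<forall>m\<in>Poly_Mapping.keys F. Poly_Mapping.keys m \<subseteq> {0..n}) \<and>
      msubst F (monomial_forms n d e) = 0"
    using assms strict_mono_onD[OF assms(2), of 0 1] strict_mono_onD[OF assms(2), of 1 2]
      strict_mono_on_leD[OF assms(2), of 2 n]
    by (intro monomial_forms_alg_dependent) auto
qed (simp add: is_form_in_def)

lemma keys_uv_partial_monomial_perazzo:
  "m \<in> Poly_Mapping.keys (uv_deriv n a b (perazzo_poly n (monomial_forms n d e) 0 :: 'a::field_char_0 mpoly)) \<longleftrightarrow>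
    (\<exists>j\<le>n. m + uv_monom n a b = var_monom j + uv_monom n (e j) (d - 1 - e j))"
  by (simp add: keys_uv_deriv keys_monomial_perazzo)

lemma uv_partial_monomial_perazzo_nonzero:
  assumes "j \<le> n" "a \<le> e j" "b \<le> d - 1 - e j"
  shows "uv_deriv n a b (perazzo_poly n (monomial_forms n d e) 0 :: 'a::field_char_0 mpoly) \<noteq> 0"
proof -
  have "var_monom j + uv_monom n (e j - a) (d - 1 - e j - b) + uv_monom n a b =
      var_monom j + uv_monom n (e j) (d - 1 - e j)"
  proof -
    have "e j - a + a = e j" "d - 1 - e j - b + b = d - 1 - e j"
      using assms(2,3) by simp_all
    then show ?thesis
      by (simp add: add.assoc uv_monom_add)
  qed
  with assms(1) have "var_monom j + uv_monom n (e j - a) (d - 1 - e j - b) \<in>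
      Poly_Mapping.keys (uv_deriv n a b (perazzo_poly n (monomial_forms n d e) 0 :: 'a mpoly))"
    unfolding keys_uv_partial_monomial_perazzo by blast
  then show ?thesis
    by auto
qed

lemma uv_partial_monomial_perazzo_key_has_x:
  assumes "m \<in> Poly_Mapping.keys (uv_deriv n a b (perazzo_poly n (monomial_forms n d e) 0 :: 'a::field_char_0 mpoly))"
  shows "\<exists>j\<le>n. Poly_Mapping.lookup m j = 1"
proof -
  obtain j where "j \<le> n" "m + uv_monom n a b = var_monom j + uv_monom n (e j) (d - 1 - e j)"
    using assms unfolding keys_uv_partial_monomial_perazzo by blast
  then have "Poly_Mapping.lookup (m + uv_monom n a b) j =
      Poly_Mapping.lookup (var_monom j + uv_monom n (e j) (d - 1 - e j)) j"
    by simp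
  with \<open>j \<le> n\<close> have "Poly_Mapping.lookup m j = 1"
    by (simp add: lookup_add)
  with \<open>j \<le> n\<close> show ?thesis
    by blast
qed

lemma uv_partials_monomial_perazzo_keys_disjoint:
  fixes n d :: nat and e :: "nat \<Rightarrow> nat" and f :: "'a::field_char_0 mpoly"
  defines "f \<equiv> perazzo_poly n (monomial_forms n d e) 0"
  assumes keys: "m \<in> Poly_Mapping.keys (uv_deriv n a b f)" "m \<in> Poly_Mapping.keys (uv_deriv n a' b' f)"
  shows "a = a'"
proof -
  obtain j j' where j: "j \<le> n" "m + uv_monom n a b = var_monom j + uv_monom n (e j) (d - 1 - e j)"
    and j': "j' \<le> n" "m + uv_monom n a' b' = var_monom j' + uv_monom n (e j') (d - 1 - e j')"
    using keys unfolding f_def keys_uv_partial_monomial_perazzo by blast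
  have lookup_m: "Poly_Mapping.lookup m k = (if k = j then 1 else 0)"
    "Poly_Mapping.lookup m k = (if k = j' then 1 else 0)" if "k \<le> n" for k
  proof -
    have "Poly_Mapping.lookup (m + uv_monom n a b) k =
        Poly_Mapping.lookup (var_monom j + uv_monom n (e j) (d - 1 - e j)) k"
      using j(2) by simp
    with that show "Poly_Mapping.lookup m k = (if k = j then 1 else 0)"
      by (simp add: lookup_add lookup_single when_def)
    have "Poly_Mapping.lookup (m + uv_monom n a' b') k =
        Poly_Mapping.lookup (var_monom j' + uv_monom n (e j') (d - 1 - e j')) k"
      using j'(2) by simp
    with that show "Poly_Mapping.lookup m k = (if k = j' then 1 else 0)"
      by (simp add: lookup_add lookup_single when_def)
  qed
  have "Poly_Mapping.lookup m j = 1"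
    using lookup_m(1)[OF j(1)] by simp
  with lookup_m(2)[OF j(1)] have "j = j'"
    by (metis zero_neq_one)
  have "Poly_Mapping.lookup (m + uv_monom n a b) (n+1) =
      Poly_Mapping.lookup (var_monom j + uv_monom n (e j) (d - 1 - e j)) (n+1)"
    "Poly_Mapping.lookup (m + uv_monom n a' b') (n+1) =
      Poly_Mapping.lookup (var_monom j' + uv_monom n (e j') (d - 1 - e j')) (n+1)"
    using j(2) j'(2) by simp_all
  with j(1) j'(1) \<open>j = j'\<close> show "a = a'"
    by (simp add: lookup_add lookup_single)
qed

lemma uv_monomial_in_span_partials_monomial_perazzo:
  fixes n d i :: nat and e :: "nat \<Rightarrow> nat" and f :: "'a::field_char_0 mpoly"
  defines "f \<equiv> perazzo_poly n (monomial_forms n d e) 0"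
  assumes j: "j \<le> n" and c: "c \<le> e j" "e j < c + i" "c + i \<le> d"
  shows "Poly_Mapping.single (uv_monom n c (d - i - c)) 1 \<in> mpoly.span (partials n i f)"
proof -
  \<comment> \<open>the witness D_(x_j) D_u^a D_v^b f, a = e_j - c, has the single monomial u^c v^(d-i-c)\<close>
  obtain a where a: "e j = c + a"
    using c(1) le_Suc_ex by blast
  with c(2) obtain b where b: "i = Suc (a + b)"
    using less_iff_Suc_add by auto
  with c(3) obtain r where r: "d = c + i + r"
    using le_Suc_ex by blast
  have ab: "Suc (a + b) = i" "c + a = e j" "d - i - c + b = d - 1 - e j"
    using a b r by simp_all
  have "mderiv j (uv_deriv n a b f) \<in> partials n i f"
    using foldr_mderiv_in_partials[of "j # replicate a (n+1) @ replicate b (n+2)" n f] j ab(1)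
    by (simp del: foldr_replicate add: uv_deriv_def set_replicate_conv_if)
  moreover have "m \<in> Poly_Mapping.keys (mderiv j (uv_deriv n a b f)) \<longleftrightarrow> m = uv_monom n c (d - i - c)"
    for m
  proof -
    have target: "uv_monom n c (d - i - c) + uv_monom n a b = uv_monom n (e j) (d - 1 - e j)"
      unfolding uv_monom_add ab(2,3) ..
    have "m \<in> Poly_Mapping.keys (mderiv j (uv_deriv n a b f)) \<longleftrightarrow>
        (\<exists>j'\<le>n. var_monom j + (m + uv_monom n a b) = var_monom j' + uv_monom n (e j') (d - 1 - e j'))"
      unfolding f_def keys_mderiv_uv_deriv keys_monomial_perazzo ..
    also have "\<dots> \<longleftrightarrow> m + uv_monom n a b = uv_monom n (e j) (d - 1 - e j)"
    proof
      assume "\<exists>j'\<le>n. var_monom j + (m + uv_monom n a b) = var_monom j' + uv_monom n (e j') (d - 1 - e j')"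
      then obtain j' where j': "j' \<le> n"
        "var_monom j + (m + uv_monom n a b) = var_monom j' + uv_monom n (e j') (d - 1 - e j')"
        by blast
      then have "Poly_Mapping.lookup (var_monom j + (m + uv_monom n a b)) j =
          Poly_Mapping.lookup (var_monom j' + uv_monom n (e j') (d - 1 - e j')) j"
        by simp
      with j have "j' = j"
        by (simp add: lookup_add lookup_single when_def split: if_splits)
      with j'(2) show "m + uv_monom n a b = uv_monom n (e j) (d - 1 - e j)"
        by simp
    next
      assume "m + uv_monom n a b = uv_monom n (e j) (d - 1 - e j)"
      with j show "\<exists>j'\<le>n. var_monom j + (m + uv_monom n a b) =
          var_monom j' + uv_monom n (e j') (d - 1 - e j')"
        by auto
    qed
    also have "\<dots> \<longleftrightarrow> m = uv_monom n c (d - i - c)"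
      unfolding target[symmetric] by simp
    finally show ?thesis .
  qed
  then have "Poly_Mapping.keys (mderiv j (uv_deriv n a b f)) = {uv_monom n c (d - i - c)}"
    by blast
  ultimately show ?thesis
    by (rule single_in_span_if_keys_eq)
qed

lemma independent_uv_partials_union_monomials:
  fixes n d i :: nat and e :: "nat \<Rightarrow> nat" and f :: "'a::field_char_0 mpoly" and C :: "nat set"
  defines "f \<equiv> perazzo_poly n (monomial_forms n d e) 0"
    and "M \<equiv> (\<lambda>c. Poly_Mapping.single (uv_monom n c (d - i - c)) 1) ` C"
  assumes uv_nonzero: "\<forall>a\<le>i. \<exists>j\<le>n. a \<le> e j \<and> e j + i \<le> d - 1 + a" and "finite C"
  shows "mpoly.independent (uv_partials n i f \<union> M)" and "card (uv_partials n i f \<union> M) = i + 1 + card C"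
proof -
  let ?A = "uv_partials n i f"
  have A_nonzero: "uv_deriv n a (i - a) f \<noteq> 0" if a: "a \<le> i" for a
  proof -
    obtain j where j: "j \<le> n" "a \<le> e j" "e j + i \<le> d - 1 + a"
      using uv_nonzero a by blast
    then have "i - a \<le> d - 1 - e j"
      by arith
    with j(1,2) show ?thesis
      unfolding f_def by (rule uv_partial_monomial_perazzo_nonzero)
  qed
  have A_disjoint: "a = a'"
    if "m \<in> Poly_Mapping.keys (uv_deriv n a (i - a) f)" "m \<in> Poly_Mapping.keys (uv_deriv n a' (i - a') f)"
    for m a a'
    using that unfolding f_def by (rule uv_partials_monomial_perazzo_keys_disjoint)
  have not_mixed: False
    if q: "q \<in> ?A" and q': "q' \<in> M" and m: "m \<in> Poly_Mapping.keys q" "m \<in> Poly_Mapping.keys q'"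
    for q q' m
  proof -
    obtain a where "q = uv_deriv n a (i - a) f"
      using q by (auto simp: uv_partials_def)
    with m(1) have "\<exists>j\<le>n. Poly_Mapping.lookup m j = 1"
      unfolding f_def by (intro uv_partial_monomial_perazzo_key_has_x) simp
    moreover obtain c where "m = uv_monom n c (d - i - c)"
      using q' m(2) by (auto simp: M_def)
    ultimately show False
      by auto
  qed
  have same: "q = q'"
    if "q \<in> ?A \<union> M" "q' \<in> ?A \<union> M" "m \<in> Poly_Mapping.keys q" "m \<in> Poly_Mapping.keys q'" for q q' m
  proof -
    have "q \<in> ?A \<and> q' \<in> ?A \<or> q \<in> M \<and> q' \<in> M"
      using that not_mixed[of q q' m] not_mixed[of q' q m] by blast
    then show ?thesis
    proof
      assume "q \<in> ?A \<and> q' \<in> ?A"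
      then obtain a a' where q: "q = uv_deriv n a (i - a) f" "q' = uv_deriv n a' (i - a') f"
        by (auto simp: uv_partials_def)
      with that(3,4) have "a = a'"
        using A_disjoint by simp
      with q show ?thesis
        by simp
    next
      assume "q \<in> M \<and> q' \<in> M"
      then obtain c c' where "q = Poly_Mapping.single (uv_monom n c (d - i - c)) 1"
        "q' = Poly_Mapping.single (uv_monom n c' (d - i - c')) 1"
        by (auto simp: M_def)
      with that(3,4) show ?thesis
        by simp
    qed
  qed
  show "mpoly.independent (?A \<union> M)"
  proof (rule independent_if_disjoint_keys)
    show "0 \<notin> ?A \<union> M"
      using A_nonzero by (auto simp: uv_partials_def M_def single_one_neq_zero)
    show "Poly_Mapping.keys q \<inter> Poly_Mapping.keys q' = {}"
      if "q \<in> ?A \<union> M" "q' \<in> ?A \<union> M" "q \<noteq> q'" for q q'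
      using same[OF that(1,2)] that(3) by blast
  qed
  have "inj_on (\<lambda>a. uv_deriv n a (i - a) f) {..i}"
  proof (rule inj_onI)
    fix a a'
    assume a: "a \<in> {..i}" and eq: "uv_deriv n a (i - a) f = uv_deriv n a' (i - a') f"
    obtain m where "m \<in> Poly_Mapping.keys (uv_deriv n a (i - a) f)"
      using A_nonzero a by (metis atMost_iff keys_eq_empty ex_in_conv)
    with eq show "a = a'"
      using A_disjoint by simp
  qed
  then have "card ?A = i + 1"
    by (simp add: uv_partials_def card_image)
  moreover have "inj_on (\<lambda>c. Poly_Mapping.single (uv_monom n c (d - i - c)) (1::'a)) C"
    by (rule inj_onI) (simp add: single_one_eq_iff uv_monom_eq_iff)
  then have "card M = card C"
    by (simp add: M_def card_image)
  moreover have "?A \<inter> M = {}"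
  proof (rule ccontr)
    assume "?A \<inter> M \<noteq> {}"
    then obtain q where q: "q \<in> ?A" "q \<in> M"
      by blast
    then obtain m where "m \<in> Poly_Mapping.keys q"
      by (auto simp: M_def)
    with not_mixed[OF q] show False
      by blast
  qed
  ultimately show "card (?A \<union> M) = i + 1 + card C"
    using \<open>finite C\<close> by (simp add: card_Un_disjoint uv_partials_def M_def)
qed

lemma hvec_monomial_perazzo_ge:
  fixes n d i :: nat and e :: "nat \<Rightarrow> nat" and f :: "'a::field_char_0 mpoly"
  defines "f \<equiv> perazzo_poly n (monomial_forms n d e) 0"
  assumes e_le: "\<forall>j\<le>n. e j \<le> d - 1"
    and uv_nonzero: "\<forall>a\<le>i. \<exists>j\<le>n. a \<le> e j \<and> e j + i \<le> d - 1 + a"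
  shows "i + 1 + card {c. c + i \<le> d \<and> (\<exists>j\<le>n. c \<le> e j \<and> e j < c + i)} \<le> hvec n f i"
proof -
  define C where "C = {c. c + i \<le> d \<and> (\<exists>j\<le>n. c \<le> e j \<and> e j < c + i)}"
  define M where "M = (\<lambda>c. Poly_Mapping.single (uv_monom n c (d - i - c)) (1::'a)) ` C"
  let ?A = "uv_partials n i f" and ?B = "mixed_partials n i f"
  have "finite C"
    by (rule finite_subset[of _ "{..d}"]) (auto simp: C_def)
  from independent_uv_partials_union_monomials[OF uv_nonzero this, where 'a = 'a]
  have indep: "mpoly.independent (?A \<union> M)" "card (?A \<union> M) = i + 1 + card C"
    unfolding f_def M_def by simp_all
  have "M \<subseteq> mpoly.span (partials n i f)"
  proof
    fix q
    assume "q \<in> M"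
    then obtain c j where cj: "j \<le> n" "c \<le> e j" "e j < c + i" "c + i \<le> d"
      and q: "q = Poly_Mapping.single (uv_monom n c (d - i - c)) 1"
      by (auto simp: M_def C_def)
    show "q \<in> mpoly.span (partials n i f)"
      unfolding q f_def by (rule uv_monomial_in_span_partials_monomial_perazzo[where e = e, OF cj])
  qed
  moreover have "?A \<subseteq> mpoly.span (partials n i f)"
    using uv_partials_subset_partials[of n i f] mpoly.span_superset[of "partials n i f"] by (rule order_trans)
  ultimately have "?A \<union> M \<subseteq> mpoly.span (partials n i f)"
    by (rule Un_least[rotated])
  moreover have "partials n i f \<subseteq> mpoly.span (?A \<union> ?B)"
  proof -
    have "\<forall>j\<le>n. is_form_in {n+1, n+2} (d - 1) (monomial_forms n d e j :: 'a mpoly)"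
      using e_le monomial_forms_is_form by blast
    moreover have "is_form_in {n+1, n+2} d (0 :: 'a mpoly)"
      by (simp add: is_form_in_def)
    ultimately have "partials n i f \<subseteq> insert 0 (?A \<union> ?B)"
      unfolding f_def by (rule partials_perazzo_subset)
    then show ?thesis
      using mpoly.span_superset[of "?A \<union> ?B"] mpoly.span_zero[of "?A \<union> ?B"] by blast
  qed
  moreover have "finite (?A \<union> ?B)"
    by (simp add: uv_partials_def mixed_partials_def)
  ultimately have "card (?A \<union> M) \<le> hvec n f i"
    unfolding hvec_def by (rule card_independent_le_dim[OF indep(1)])
  with indep(2) show ?thesis
    by (simp add: C_def)
qed

section \<open>Evenly spread exponents\<close>

definition spread_gap :: "nat \<Rightarrow> nat \<Rightarrow> nat" where
  "spread_gap n d = (d + 1) div (n + 2)"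

text \<open>With e_(-1) = -1 and e_(n+1) = d, all n + 2 gaps e_(j+1) - e_j have length t or t + 1,
  where t = spread_gap n d.\<close>

definition spread_exp :: "nat \<Rightarrow> nat \<Rightarrow> nat \<Rightarrow> nat" where
  "spread_exp n d j = (j + 1) * spread_gap n d - 1 + min j ((d + 1) mod (n + 2))"

context
  fixes n d :: nat
  assumes n2: "2 \<le> n" and dn: "n + 1 \<le> d"
begin

lemma spread_gap_pos: "1 \<le> spread_gap n d"
proof -
  have "(n + 2) div (n + 2) \<le> (d + 1) div (n + 2)"
    using dn by (intro div_le_mono) simp
  then show ?thesis
    by (simp add: spread_gap_def)
qed

lemma spread_gap_decomp: "(n + 2) * spread_gap n d + (d + 1) mod (n + 2) = d + 1"
  unfolding spread_gap_def by (rule mult_div_mod_eq)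

lemma spread_exp_Suc:
  "spread_exp n d j + spread_gap n d \<le> spread_exp n d (Suc j)"
  "spread_exp n d (Suc j) \<le> spread_exp n d j + spread_gap n d + 1"
proof -
  have "(Suc j + 1) * spread_gap n d = (j + 1) * spread_gap n d + spread_gap n d"
    by simp
  moreover have "1 \<le> (j + 1) * spread_gap n d"
    using spread_gap_pos by simp
  moreover have "min j ((d + 1) mod (n + 2)) \<le> min (Suc j) ((d + 1) mod (n + 2))"
    "min (Suc j) ((d + 1) mod (n + 2)) \<le> min j ((d + 1) mod (n + 2)) + 1"
    by simp_all
  ultimately show "spread_exp n d j + spread_gap n d \<le> spread_exp n d (Suc j)"
    "spread_exp n d (Suc j) \<le> spread_exp n d j + spread_gap n d + 1"
    unfolding spread_exp_def by linarith+
qed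

lemma spread_exp_mono: "j \<le> k \<Longrightarrow> spread_exp n d j + (k - j) * spread_gap n d \<le> spread_exp n d k"
proof (induction k rule: dec_induct)
  case (step k)
  then show ?case
    using spread_exp_Suc(1)[of k] by (simp add: Suc_diff_le)
qed simp

lemma strict_mono_spread_exp: "strict_mono (spread_exp n d)"
proof (unfold strict_mono_Suc_iff, intro allI)
  fix j
  show "spread_exp n d j < spread_exp n d (Suc j)"
    using spread_exp_Suc(1)[of j] spread_gap_pos by linarith
qed

lemma spread_exp_0: "spread_exp n d 0 = spread_gap n d - 1"
  by (simp add: spread_exp_def)

lemma spread_exp_last:
  "d \<le> spread_exp n d n + spread_gap n d + 1" "spread_exp n d n + spread_gap n d \<le> d"
proof -
  let ?s = "(d + 1) mod (n + 2)"
  have "1 \<le> (n + 1) * spread_gap n d"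
    using spread_gap_pos by simp
  then have "spread_exp n d n + 1 = (n + 1) * spread_gap n d + min n ?s"
    by (simp add: spread_exp_def)
  moreover have "(n + 1) * spread_gap n d + spread_gap n d + ?s = d + 1"
    using spread_gap_decomp by (simp add: algebra_simps)
  moreover have "?s \<le> min n ?s + 1"
    using mod_less_divisor[of "n + 2" "d + 1"] by (simp add: min_def)
  ultimately show "d \<le> spread_exp n d n + spread_gap n d + 1" "spread_exp n d n + spread_gap n d \<le> d"
    by (simp_all add: min_def split: if_splits)
qed

lemma spread_exp_cover:
  assumes "c \<le> spread_exp n d k"
  shows "\<exists>j\<le>k. c \<le> spread_exp n d j \<and> spread_exp n d j \<le> c + spread_gap n d"
  using assms
proof (induction k)
  case 0
  then show ?case
    using spread_exp_0 by auto
next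
  case (Suc k)
  show ?case
  proof (cases "c \<le> spread_exp n d k")
    case True
    then show ?thesis
      using Suc.IH le_SucI by blast
  next
    case False
    then show ?thesis
      using Suc.prems spread_exp_Suc(2)[of k] by (intro exI[of _ "Suc k"]) auto
  qed
qed

lemma spread_gap_plus_le:
  assumes "i \<le> d div 2"
  shows "spread_gap n d + i \<le> d - 1"
proof -
  have "4 * spread_gap n d \<le> (n + 2) * spread_gap n d"
    using n2 by (intro mult_le_mono1) simp
  then show ?thesis
    using spread_gap_decomp assms dn n2 by linarith
qed

lemma spread_exp_uv_nonzero:
  assumes "i \<le> d div 2"
  shows "\<forall>a\<le>i. \<exists>j\<le>n. a \<le> spread_exp n d j \<and> spread_exp n d j + i \<le> d - 1 + a"
proof (intro allI impI)
  fix a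
  assume "a \<le> i"
  moreover have "spread_gap n d + i \<le> d - 1"
    using assms by (rule spread_gap_plus_le)
  ultimately have "a \<le> spread_exp n d n"
    using spread_exp_last(1) by linarith
  then obtain j where "j \<le> n" "a \<le> spread_exp n d j" "spread_exp n d j \<le> a + spread_gap n d"
    using spread_exp_cover by blast
  with \<open>spread_gap n d + i \<le> d - 1\<close>
  show "\<exists>j\<le>n. a \<le> spread_exp n d j \<and> spread_exp n d j + i \<le> d - 1 + a"
    by (intro exI[of _ j]) auto
qed

lemma card_spread_windows:
  assumes "1 \<le> i" "i \<le> d div 2"
  shows "min ((n + 1) * i) (d - i + 1) \<le>
    card {c. c + i \<le> d \<and> (\<exists>j\<le>n. c \<le> spread_exp n d j \<and> spread_exp n d j < c + i)}"
    (is "_ \<le> card ?C")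
proof -
  \<comment> \<open>the windows e_j - i < c <= e_j are disjoint if i <= spread_gap n d, else they cover 0..d-i\<close>
  have finite: "finite ?C"
    by (rule finite_subset[of _ "{..d}"]) auto
  show ?thesis
  proof (cases "i \<le> spread_gap n d")
    case True
    let ?h = "\<lambda>(j, a). spread_exp n d j - a"
    have low: "a \<le> spread_exp n d j" if "a < i" for a j
      using that True spread_exp_0 spread_exp_mono[of 0 j] by linarith
    have less: "spread_exp n d j - a < spread_exp n d j' - a'" if "j < j'" "a < i" "a' < i" for j j' a a'
    proof -
      have "1 * spread_gap n d \<le> (j' - j) * spread_gap n d"
        using that(1) by (intro mult_le_mono1) simp
      then have "spread_exp n d j + spread_gap n d \<le> spread_exp n d j'"
        using spread_exp_mono[of j j'] that(1) by linarith
      then show ?thesis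
        using low[of a' j'] that(3) True by linarith
    qed
    have "inj_on ?h ({..n} \<times> {..<i})"
    proof (rule inj_onI, clarsimp)
      fix j a j' a'
      assume "a < i" "a' < i" and eq: "spread_exp n d j - a = spread_exp n d j' - a'"
      then have "j = j'"
        using less[of j j' a a'] less[of j' j a' a] by (cases j j' rule: linorder_cases) auto
      with eq show "j = j' \<and> a = a'"
        using low[OF \<open>a < i\<close>, of j] low[OF \<open>a' < i\<close>, of j'] by auto
    qed
    moreover have "?h ` ({..n} \<times> {..<i}) \<subseteq> ?C"
    proof
      fix x
      assume "x \<in> ?h ` ({..n} \<times> {..<i})"
      then obtain j a where "x = spread_exp n d j - a" "j \<le> n" "a < i"
        by auto
      moreover have "spread_exp n d j \<le> d - spread_gap n d"
        using spread_exp_mono[of j n] spread_exp_last(2) \<open>j \<le> n\<close> by linarith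
      ultimately show "x \<in> ?C"
        using low[of a j] True spread_gap_plus_le[OF assms(2)] by (auto intro!: exI[of _ j])
    qed
    ultimately have "(n + 1) * i \<le> card ?C"
      using card_inj_on_le[OF _ _ finite] by (fastforce simp: card_cartesian_product)
    then show ?thesis
      by simp
  next
    case False
    have "{..d - i} \<subseteq> ?C"
    proof
      fix c
      assume "c \<in> {..d - i}"
      then have "c \<le> spread_exp n d n"
        using spread_exp_last(1) False by auto
      then obtain j where "j \<le> n" "c \<le> spread_exp n d j" "spread_exp n d j \<le> c + spread_gap n d"
        using spread_exp_cover by blast
      with \<open>c \<in> {..d - i}\<close> False assms show "c \<in> ?C"
        by auto
    qed
    from card_mono[OF finite this] have "d - i + 1 \<le> card ?C"
      by simp
    then show ?thesis
      by simp
  qed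
qed

lemma perazzo_data_spread:
  "perazzo_data n d (monomial_forms n d (spread_exp n d) :: nat \<Rightarrow> 'a::field mpoly) 0"
proof (rule perazzo_data_monomial_forms[OF n2])
  show "strict_mono_on {..n} (spread_exp n d)"
    by (rule monotone_on_subset[OF strict_mono_spread_exp]) simp
  show "spread_exp n d n \<le> d - 1"
    using spread_exp_last(2) spread_gap_pos by linarith
qed

lemma hvec_spread_perazzo:
  assumes "1 \<le> i" "i \<le> d div 2"
  shows "hvec n (perazzo_poly n (monomial_forms n d (spread_exp n d)) 0 :: 'a::field_char_0 mpoly) i =
    min ((n + 2) * i + 1) (d + 2)"
proof -
  let ?f = "perazzo_poly n (monomial_forms n d (spread_exp n d)) 0 :: 'a mpoly"
  have e_le: "\<forall>j\<le>n. spread_exp n d j \<le> d - 1"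
  proof (intro allI impI)
    fix j
    assume "j \<le> n"
    then have "spread_exp n d j \<le> spread_exp n d n"
      using spread_exp_mono[of j n] by linarith
    then show "spread_exp n d j \<le> d - 1"
      using spread_exp_last(2) spread_gap_pos by linarith
  qed
  have "hvec n ?f i \<le> min ((n + 2) * i + 1) (d + 2)"
  proof (rule hvec_perazzo_le)
    show "\<forall>j\<le>n. is_form_in {n+1, n+2} (d - 1) (monomial_forms n d (spread_exp n d) j :: 'a mpoly)"
      using e_le monomial_forms_is_form by blast
    show "is_form_in {n+1, n+2} d (0 :: 'a mpoly)"
      by (simp add: is_form_in_def)
    show "i \<le> d"
      using assms(2) by linarith
  qed
  moreover have "i + 1 + min ((n + 1) * i) (d - i + 1) \<le> hvec n ?f i"
    using hvec_monomial_perazzo_ge[OF e_le spread_exp_uv_nonzero[OF assms(2)], where 'a = 'a]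
      card_spread_windows[OF assms] by linarith
  moreover have "min ((n + 2) * i + 1) (d + 2) = i + 1 + min ((n + 1) * i) (d - i + 1)"
  proof -
    have "(n + 2) * i + 1 = i + 1 + (n + 1) * i" "d + 2 = i + 1 + (d - i + 1)"
      using assms(2) by simp_all
    then show ?thesis
      by (simp add: min_def)
  qed
  ultimately show ?thesis
    by linarith
qed

end

lemma hvec_perazzo_form_le:
  fixes f :: "'a::field_char_0 mpoly"
  assumes "is_perazzo_form n d f" "i \<le> d"
  shows "hvec n f i \<le> min ((n + 2) * i + 1) (d + 2)"
proof -
  obtain p g where "perazzo_data n d p g" and f: "f = perazzo_poly n p g"
    using assms(1) unfolding is_perazzo_form_def by blast
  then have "\<forall>j\<le>n. is_form_in {n+1, n+2} (d - 1) (p j)" "is_form_in {n+1, n+2} d g"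
    unfolding perazzo_data_def by blast+
  then show ?thesis
    unfolding f using assms(2) by (rule hvec_perazzo_le)
qed

theorem theorem3p5:
  fixes n d :: nat
  assumes alg_closed: "\<forall>q :: 'a::field_char_0 poly. degree q \<ge> 1 \<longrightarrow> (\<exists>x. poly q x = 0)"
    and n2: "n \<ge> 2"
    and dn: "d \<ge> n + 1"
  shows "(\<forall>f :: 'a mpoly. is_perazzo_form n d f \<longrightarrow>
            (\<forall>i. 1 \<le> i \<and> i \<le> d div 2 \<longrightarrow> hvec n f i \<le> min ((n + 2) * i + 1) (d + 2)))
       \<and> (\<exists>p :: nat \<Rightarrow> 'a mpoly. perazzo_data n d p 0 \<and>
            (\<forall>i. 1 \<le> i \<and> i \<le> d div 2 \<longrightarrow>
                 hvec n (perazzo_poly n p 0) i = min ((n + 2) * i + 1) (d + 2)))"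
proof (intro conjI allI impI exI[of _ "monomial_forms n d (spread_exp n d)"])
  fix f :: "'a mpoly" and i
  assume f: "is_perazzo_form n d f" and "1 \<le> i \<and> i \<le> d div 2"
  then have "i \<le> d"
    by linarith
  with f show "hvec n f i \<le> min ((n + 2) * i + 1) (d + 2)"
    by (rule hvec_perazzo_form_le)
next
  show "perazzo_data n d (monomial_forms n d (spread_exp n d)) 0"
    by (rule perazzo_data_spread[OF n2 dn])
next
  fix i
  assume "1 \<le> i \<and> i \<le> d div 2"
  then show "hvec n (perazzo_poly n (monomial_forms n d (spread_exp n d)) 0 :: 'a mpoly) i =
      min ((n + 2) * i + 1) (d + 2)"
    using hvec_spread_perazzo[OF n2 dn] by blast
qed

end
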